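(* Every flat $\curlyvee$-algebra $S$ is simple (every homomorphism from $S$ into a $\curlyvee$-algebra is either injective or constant), hence subdirectly irreducible.
   Context: A flat $\curlyvee$-algebra is an algebra $(S,\curlyvee)$ with a binary operation and an element $0\in S$ such that $a\curlyvee b=0$ whenever $a,b$ are distinct and both different from $0$, and $a\curlyvee a=a$, $a\curlyvee 0=0\curlyvee a=a$ for all $a\in S$. A $\curlyvee$-algebra is an algebra $(S,\curlyvee)$ such that, defining $a\sqcup b=a\curlyvee(a\curlyvee b)$ and $a\lesssim b$ iff $b\sqcup a=b$: $\sqcup$ is associative, $a\sqcup a=a$, $a\sqcup b=(a\sqcup b)\sqcup a$; $\curlyvee$ is commutative and idempotent; $(a\curlyvee b)\sqcup(a\sqcup b)=a\sqcup b$; $a\sqcup(b\curlyvee c)=(a\sqcup b)\curlyvee(a\sqcup c)$; and if $d\lesssim a,b,c,a\curlyvee b,b\curlyvee c$ then $d\lesssim a\curlyvee c$. *)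

theory Defs
  imports Main
begin

definition flat_valg :: "('a \<Rightarrow> 'a \<Rightarrow> 'a) \<Rightarrow> 'a \<Rightarrow> bool" where
  "flat_valg v z \<longleftrightarrow>
     (\<forall>a b. a \<noteq> b \<and> a \<noteq> z \<and> b \<noteq> z \<longrightarrow> v a b = z) \<and>
     (\<forall>a. v a a = a \<and> v a z = a \<and> v z a = a)"

definition vjoin :: "('a \<Rightarrow> 'a \<Rightarrow> 'a) \<Rightarrow> 'a \<Rightarrow> 'a \<Rightarrow> 'a" where
  "vjoin v a b = v a (v a b)"

definition vle :: "('a \<Rightarrow> 'a \<Rightarrow> 'a) \<Rightarrow> 'a \<Rightarrow> 'a \<Rightarrow> bool" where
  "vle v a b \<longleftrightarrow> vjoin v b a = b"

definition valg :: "('a \<Rightarrow> 'a \<Rightarrow> 'a) \<Rightarrow> bool" where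
  "valg v \<longleftrightarrow>
     (\<forall>a b c. vjoin v (vjoin v a b) c = vjoin v a (vjoin v b c)) \<and>
     (\<forall>a. vjoin v a a = a) \<and>
     (\<forall>a b. vjoin v a b = vjoin v (vjoin v a b) a) \<and>
     (\<forall>a b. v a b = v b a) \<and>
     (\<forall>a. v a a = a) \<and>
     (\<forall>a b. vjoin v (v a b) (vjoin v a b) = vjoin v a b) \<and>
     (\<forall>a b c. vjoin v a (v b c) = v (vjoin v a b) (vjoin v a c)) \<and>
     (\<forall>a b c d. vle v d a \<and> vle v d b \<and> vle v d c \<and> vle v d (v a b) \<and> vle v d (v b c)
        \<longrightarrow> vle v d (v a c))"

end

theory Submission
  imports Defs
begin

text \<open>Let \<open>h\<close> be a homomorphism from a flat algebra with zero \<open>z\<close>. If \<open>h\<close> identifies two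
  distinct nonzero elements \<open>a\<close>, \<open>b\<close>, then \<open>h z = h (a \<curlyvee> b) = h a \<curlyvee> h a = h a\<close>, so \<open>h\<close>
  identifies some nonzero element \<open>c\<close> with \<open>z\<close>. Then for every \<open>d\<close> different from \<open>c\<close> and \<open>z\<close>,
  \<open>h z = h (c \<curlyvee> d) = h z \<curlyvee> h d = h (z \<curlyvee> d) = h d\<close>, so \<open>h\<close> is constant.\<close>

lemma flat_valgD:
  assumes "flat_valg v z"
  shows flat_valg_distinct: "\<lbrakk>a \<noteq> b; a \<noteq> z; b \<noteq> z\<rbrakk> \<Longrightarrow> v a b = z"
    and flat_valg_idem: "v a a = a"
    and flat_valg_zero_left: "v z a = a"
  using assms unfolding flat_valg_def by blast+

lemma flat_valg_hom_identifies_nonzero_with_zero: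
  assumes flat: "flat_valg v z"
    and hom: "\<And>a b. h (v a b) = w (h a) (h b)"
    and "a \<noteq> b" and "h a = h b"
  obtains c where "c \<noteq> z" and "h c = h z"
proof (cases "a = z \<or> b = z")
  case True
  then show ?thesis using that \<open>a \<noteq> b\<close> \<open>h a = h b\<close> by metis
next
  case False
  have "h z = h (v a b)"
    using flat_valg_distinct[OF flat] \<open>a \<noteq> b\<close> False by simp
  also have "\<dots> = w (h a) (h a)"
    using hom \<open>h a = h b\<close> by simp
  also have "\<dots> = h (v a a)"
    using hom by simp
  also have "\<dots> = h a"
    using flat_valg_idem[OF flat] by simp
  finally show ?thesis
    using that False by metis
qed

lemma flat_valg_hom_const_if_nonzero_to_zero:
  assumes flat: "flat_valg v z"
    and hom: "\<And>a b. h (v a b) = w (h a) (h b)"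
    and "c \<noteq> z" and "h c = h z"
  shows "h d = h z"
proof (cases "d = z \<or> d = c")
  case True
  then show ?thesis using \<open>h c = h z\<close> by auto
next
  case False
  have "h z = h (v c d)"
    using flat_valg_distinct[OF flat] \<open>c \<noteq> z\<close> False by metis
  also have "\<dots> = w (h z) (h d)"
    using hom \<open>h c = h z\<close> by simp
  also have "\<dots> = h (v z d)"
    using hom by simp
  also have "\<dots> = h d"
    using flat_valg_zero_left[OF flat] by simp
  finally show ?thesis by simp
qed

theorem proposition4p2:
  fixes v :: "'a \<Rightarrow> 'a \<Rightarrow> 'a" and z :: 'a
    and w :: "'b \<Rightarrow> 'b \<Rightarrow> 'b" and h :: "'a \<Rightarrow> 'b"
  assumes "flat_valg v z"
    and "valg w"
    and "\<forall>a b. h (v a b) = w (h a) (h b)"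
  shows "inj h \<or> (\<forall>x y. h x = h y)"
proof (cases "inj h")
  case False
  then obtain a b where "a \<noteq> b" and "h a = h b"
    unfolding inj_def by blast
  have hom: "\<And>a b. h (v a b) = w (h a) (h b)"
    using assms(3) by blast
  obtain c where "c \<noteq> z" and "h c = h z"
    using flat_valg_hom_identifies_nonzero_with_zero[OF assms(1) hom \<open>a \<noteq> b\<close> \<open>h a = h b\<close>] .
  have const: "h d = h z" for d
    by (rule flat_valg_hom_const_if_nonzero_to_zero[OF assms(1) hom \<open>c \<noteq> z\<close> \<open>h c = h z\<close>])
  then show ?thesis
    by metis
qed simp

end
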